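(* Let $R$ be an associative ring with identity $1$ and an involution $*$, and let $p,q\in R$ be projections. Then the following are equivalent: (1) $p(1-q)$ and $(1-p)q$ are both MP invertible; (2) $p-q$ is MP invertible.
   Context: An involution on $R$ is a map $a\mapsto a^*$ with $(a^* )^*=a$, $(a+b)^*=a^*+b^*$, $(ab)^*=b^*a^*$. An element $a$ is MP invertible if there is $b$ with $aba=a$, $bab=b$, $(ab)^*=ab$, $(ba)^*=ba$; this $b$ is unique and written $a^{\dagger}$. A projection is an element $p$ with $p^2=p=p^*$. *)

theory Defs
  imports Main
begin

class ring_invol = ring_1 +
  fixes invol :: "'a \<Rightarrow> 'a"
  assumes invol_invol: "invol (invol a) = a"
    and invol_add: "invol (a + b) = invol a + invol b"
    and invol_mult: "invol (a * b) = invol b * invol a"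

definition mp_inverse_of :: "'a::ring_invol \<Rightarrow> 'a \<Rightarrow> bool" where
  "mp_inverse_of a b \<longleftrightarrow> a * b * a = a \<and> b * a * b = b \<and>
     invol (a * b) = a * b \<and> invol (b * a) = b * a"

definition mp_invertible :: "'a::ring_invol \<Rightarrow> bool" where
  "mp_invertible a \<longleftrightarrow> (\<exists>b. mp_inverse_of a b)"

definition projection :: "'a::ring_invol \<Rightarrow> bool" where
  "projection p \<longleftrightarrow> p * p = p \<and> invol p = p"

end

theory Submission
  imports Defs
begin

text \<open>
  Write \<open>c = p - q\<close>. Since \<open>p(1 - q) = pc\<close> and \<open>(1 - p)q = -(1 - p)c\<close>, the element \<open>c\<close>
  splits as \<open>p(1 - q) - (1 - p)q\<close>, a difference of two elements that are orthogonal in the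
  sense \<open>x\<^sup>*y = 0 = xy\<^sup>*\<close>; MP inverses of orthogonal summands add up to an MP inverse of the
  sum. Conversely, if \<open>c\<close> has an MP inverse \<open>d\<close>, then \<open>d\<close> is self-adjoint and commutes
  with \<open>c\<close>, and \<open>p\<close>, \<open>q\<close> commute with \<open>c\<^sup>2\<close> and hence with the projection \<open>cd\<close>. Together with
  \<open>pc = c(1 - q)\<close> and \<open>(1 - p)c = cq\<close> this makes \<open>(1 - q)dp\<close> and \<open>qd(1 - p)\<close> the MP inverses
  of \<open>pc\<close> and \<open>(1 - p)c\<close>.
\<close>

lemma invol_zero [simp]: "invol (0::'a::ring_invol) = 0"
  using invol_add[of "0::'a" 0] by simp

lemma invol_minus [simp]: "invol (- x) = - invol (x::'a::ring_invol)"
  using invol_add[of "-x" x] by (simp add: eq_neg_iff_add_eq_0)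

lemma invol_diff [simp]: "invol (x - y) = invol x - invol (y::'a::ring_invol)"
  using invol_add[of x "-y"] by simp

lemma invol_one [simp]: "invol (1::'a::ring_invol) = 1"
  by (metis invol_invol invol_mult mult_1_right mult_1_left)

lemma projection_one_minus: "projection p \<Longrightarrow> projection (1 - p)"
  by (simp add: projection_def algebra_simps)

lemma projection_idem_left: "projection p \<Longrightarrow> p * (p * x) = p * x"
  by (simp add: projection_def mult.assoc[symmetric])

lemma mp_inverse_unique:
  assumes "mp_inverse_of a b" and "mp_inverse_of a b'"
  shows "b = b'"
proof -
  from assms have b: "a*b*a = a" "b*a*b = b" "invol (a*b) = a*b" "invol (b*a) = b*a"
    and b': "a*b'*a = a" "b'*a*b' = b'" "invol (a*b') = a*b'" "invol (b'*a) = b'*a"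
    by (auto simp: mp_inverse_of_def)
  have "b = b * invol (a*b)"
    using b by (simp add: mult.assoc)
  also have "\<dots> = b * invol (a*b'*a*b)"
    using b'(1) by simp
  also have "\<dots> = b * (invol (a*b) * invol (a*b'))"
    by (simp add: invol_mult[symmetric] mult.assoc)
  also have "\<dots> = b*a*b'"
    using b b' by (metis mult.assoc)
  finally have left: "b = b*a*b'" .
  have "b' = invol (b'*a) * b'"
    using b' by simp
  also have "\<dots> = invol (b'*a*b*a) * b'"
    using b(1) by (simp add: mult.assoc)
  also have "\<dots> = invol (b*a) * invol (b'*a) * b'"
    by (simp add: invol_mult[symmetric] mult.assoc)
  also have "\<dots> = b*a*b'"
    using b b' by (simp add: mult.assoc)
  finally show ?thesis using left by simp
qed

lemma mp_inverse_minus: "mp_inverse_of a b \<Longrightarrow> mp_inverse_of (- a) (- b)"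
  by (simp add: mp_inverse_of_def)

lemma mp_invertible_minus_iff: "mp_invertible (- a) \<longleftrightarrow> mp_invertible a"
  by (metis mp_invertible_def mp_inverse_minus minus_minus)

lemma mp_inverse_invol:
  assumes "mp_inverse_of a b"
  shows "mp_inverse_of (invol a) (invol b)"
proof -
  from assms have "a*b*a = a" "b*a*b = b" "invol (a*b) = a*b" "invol (b*a) = b*a"
    by (auto simp: mp_inverse_of_def)
  moreover have "invol a * invol b * invol a = invol (a*b*a)"
    and "invol b * invol a * invol b = invol (b*a*b)"
    and "invol a * invol b = invol (b*a)" and "invol b * invol a = invol (a*b)"
    by (simp_all add: invol_mult mult.assoc)
  ultimately show ?thesis
    by (simp add: mp_inverse_of_def)
qed

lemma mp_inverse_selfadjoint:
  assumes b: "mp_inverse_of a b" and a: "invol a = a"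
  shows "invol b = b"
  using mp_inverse_unique[OF mp_inverse_invol[OF b]] b a by simp

lemma mp_inverse_selfadjoint_commute:
  assumes b: "mp_inverse_of a b" and a: "invol a = a"
  shows "a * b = b * a"
  using b mp_inverse_selfadjoint[OF b a] a invol_mult[of a b]
  by (simp add: mp_inverse_of_def)

text \<open>\<open>b = b (a b)\<^sup>* = b b\<^sup>* a\<^sup>*\<close> and \<open>b = (b a)\<^sup>* b = a\<^sup>* b\<^sup>* b\<close>.\<close>

lemma mp_inverse_mult_eq_zero_left:
  assumes "mp_inverse_of a b" and "invol a * y = 0"
  shows "b * y = 0"
proof -
  from assms(1) have "b = b * invol b * invol a"
    by (metis mp_inverse_of_def invol_mult mult.assoc)
  then show ?thesis using assms(2) by (metis mult.assoc mult_zero_right)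
qed

lemma mp_inverse_mult_eq_zero_right:
  assumes "mp_inverse_of a b" and "y * invol a = 0"
  shows "y * b = 0"
proof -
  from assms(1) have "b = invol a * invol b * b"
    by (metis mp_inverse_of_def invol_mult)
  then show ?thesis using assms(2) by (metis mult.assoc mult_zero_left)
qed

lemma mp_inverse_add_orthogonal:
  assumes a: "mp_inverse_of a a'" and b: "mp_inverse_of b b'"
    and ab: "invol a * b = 0" and ab': "a * invol b = 0"
  shows "mp_inverse_of (a + b) (a' + b')"
proof -
  have ba: "invol b * a = 0" and ba': "b * invol a = 0"
    using ab ab' invol_mult[of "invol a" b] invol_mult[of a "invol b"]
    by (simp_all add: invol_invol)
  have "a' * b = 0" "b * a' = 0" "b' * a = 0" "a * b' = 0"
    using mp_inverse_mult_eq_zero_left[OF a ab] mp_inverse_mult_eq_zero_right[OF a ba']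
      mp_inverse_mult_eq_zero_left[OF b ba] mp_inverse_mult_eq_zero_right[OF b ab'] .
  then have "(a + b) * (a' + b') = a*a' + b*b'" "(a' + b') * (a + b) = a'*a + b'*b"
    and "(a*a' + b*b') * (a + b) = a*a'*a + b*b'*b"
    and "(a'*a + b'*b) * (a' + b') = a'*a*a' + b'*b*b'"
    by (simp_all add: algebra_simps)
  with a b show ?thesis
    by (simp add: mp_inverse_of_def invol_add)
qed

text \<open>
  If \<open>ab = ba\<close>, then \<open>ab = a\<^sup>2b\<^sup>2 = b\<^sup>2a\<^sup>2\<close> is an idempotent absorbing \<open>a\<^sup>2\<close> on both sides;
  so anything commuting with \<open>a\<^sup>2\<close> commutes with \<open>ab\<close>.
\<close>

lemma mp_inverse_commute_square_imp_commute:
  assumes b: "mp_inverse_of a b" and ab: "a * b = b * a"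
    and x: "x * (a * a) = (a * a) * x"
  shows "x * (a * b) = (a * b) * x"
proof -
  from b have aba: "a*b*a = a" and bab: "b*a*b = b"
    by (auto simp: mp_inverse_of_def)
  define e where "e = a * b"
  have e_sq: "e = (a*a) * (b*b)" "e = (b*b) * (a*a)"
    using aba bab ab by (simp_all add: e_def mult.assoc) (metis mult.assoc)
  have e_absorb: "e * (a*a) = a*a" "(a*a) * e = a*a"
  proof -
    show "e * (a*a) = a*a"
      using aba by (simp add: e_def mult.assoc[symmetric])
    have "(a*a) * e = a * (a*b*a)"
      using ab by (metis e_def mult.assoc)
    then show "(a*a) * e = a*a"
      using aba by simp
  qed
  have "e * x * e = x * e"
    using e_sq(1) e_absorb(1) x by (metis mult.assoc)
  moreover have "e * x * e = e * x"
    using e_sq(2) e_absorb(2) x by (metis mult.assoc)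
  ultimately show ?thesis by (simp add: e_def)
qed

lemma mp_inverse_projection_mult:
  assumes d: "mp_inverse_of c d" and cd: "c * d = d * c"
    and x: "projection x" and y: "projection y"
    and xe: "x * (c * d) = (c * d) * x" and ye: "y * (c * d) = (c * d) * y"
    and xc: "x * c = c * y"
  shows "mp_inverse_of (x * c) (y * d * x)"
proof -
  from d have cdc: "c*d*c = c" and dcd: "d*c*d = d" and e_adj: "invol (c*d) = c*d"
    by (auto simp: mp_inverse_of_def)
  define e where "e = c * d"
  have ec: "e*c = c" and ed: "e*d = d"
    using cdc dcd cd by (simp_all add: e_def)
  from x y have xx: "x*x = x" "invol x = x" and yy: "y*y = y" "invol y = y"
    by (simp_all add: projection_def)
  have xe': "x*e = e*x" and ye': "y*e = e*y"
    using xe ye by (simp_all add: e_def)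
  have right: "(x*c) * (y*d*x) = x*e"
  proof -
    have "(x*c) * (y*d*x) = x*(x*c)*d*x"
      using xc by (metis mult.assoc)
    also have "\<dots> = x*(e*x)"
      using xx by (simp add: e_def mult.assoc projection_idem_left[OF x])
    finally show ?thesis
      using xe' xx by (metis mult.assoc)
  qed
  have left: "(y*d*x) * (x*c) = y*e"
  proof -
    have "(y*d*x) * (x*c) = y*d*(x*c)"
      using xx by (metis mult.assoc)
    also have "\<dots> = y*(d*c)*y"
      using xc by (metis mult.assoc)
    also have "\<dots> = y*e*y"
      using cd by (simp add: e_def)
    finally show ?thesis
      using ye' yy by (metis mult.assoc)
  qed
  have "(x*e) * (x*c) = x*c"
    using xe' xx ec by (metis mult.assoc)
  moreover have "(y*e) * (y*d*x) = y*d*x"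
    using ye' yy ed by (metis mult.assoc)
  moreover have "invol (x*e) = x*e" "invol (y*e) = y*e"
    using e_adj xx yy xe' ye' by (simp_all add: e_def invol_mult)
  ultimately show ?thesis
    using right left by (simp add: mp_inverse_of_def)
qed

lemma mp_invertible_diff_if_parts:
  fixes p q :: "'a::ring_invol"
  assumes p: "projection p" and q: "projection q"
    and pq: "mp_invertible (p * (1 - q))" and qp: "mp_invertible ((1 - p) * q)"
  shows "mp_invertible (p - q)"
proof -
  obtain a' b' where a': "mp_inverse_of (p * (1 - q)) a'"
    and b': "mp_inverse_of (- ((1 - p) * q)) b'"
    using pq qp by (auto simp: mp_invertible_def dest: mp_inverse_minus)
  from p q have "invol (p * (1 - q)) * - ((1 - p) * q) = 0"
    and "p * (1 - q) * invol (- ((1 - p) * q)) = 0"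
    by (simp_all add: projection_def invol_mult algebra_simps projection_idem_left)
  from mp_inverse_add_orthogonal[OF a' b' this]
  have "mp_inverse_of (p * (1 - q) + - ((1 - p) * q)) (a' + b')" .
  moreover have "p * (1 - q) + - ((1 - p) * q) = p - q"
    by (simp add: algebra_simps)
  ultimately show ?thesis
    unfolding mp_invertible_def by auto
qed

lemma mp_invertible_parts_if_diff:
  fixes p q :: "'a::ring_invol"
  assumes p: "projection p" and q: "projection q" and pq: "mp_invertible (p - q)"
  shows "mp_invertible (p * (1 - q)) \<and> mp_invertible ((1 - p) * q)"
proof -
  define c where "c = p - q"
  obtain d where d: "mp_inverse_of c d"
    using pq by (auto simp: mp_invertible_def c_def)
  have "invol c = c"
    using p q by (simp add: c_def projection_def)
  then have cd: "c * d = d * c"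
    using mp_inverse_selfadjoint_commute[OF d] by simp
  have "p * (c*c) = (c*c) * p" and "q * (c*c) = (c*c) * q"
    using p q by (simp_all add: c_def projection_def algebra_simps projection_idem_left)
  then have pe: "p * (c*d) = (c*d) * p" and qe: "q * (c*d) = (c*d) * q"
    using mp_inverse_commute_square_imp_commute[OF d cd] by simp_all
  then have pe': "(1 - p) * (c*d) = (c*d) * (1 - p)" and qe': "(1 - q) * (c*d) = (c*d) * (1 - q)"
    by (simp_all add: algebra_simps)
  have "p * c = c * (1 - q)" and "(1 - p) * c = c * q"
    using p q by (simp_all add: c_def projection_def algebra_simps)
  then have "mp_inverse_of (p * c) ((1 - q) * d * p)"
    and "mp_inverse_of ((1 - p) * c) (q * d * (1 - p))"
    using mp_inverse_projection_mult[OF d cd p projection_one_minus[OF q] pe qe']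
      mp_inverse_projection_mult[OF d cd projection_one_minus[OF p] q pe' qe]
    by simp_all
  moreover have "p * c = p * (1 - q)" and "(1 - p) * c = - ((1 - p) * q)"
    using p by (simp_all add: c_def projection_def algebra_simps)
  ultimately show ?thesis
    by (metis mp_invertible_def mp_invertible_minus_iff)
qed

theorem theorem2p7:
  fixes p q :: "'a::ring_invol"
  assumes "projection p" and "projection q"
  shows "(mp_invertible (p * (1 - q)) \<and> mp_invertible ((1 - p) * q))
         \<longleftrightarrow> mp_invertible (p - q)"
  using assms mp_invertible_diff_if_parts mp_invertible_parts_if_diff by blast

end
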